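(* Let $\mu_0$ be a probability measure on $\mathbb R^3$ with $\int|v|^4\mu_0(dv)<\infty$ and $|\hat\mu_0(\xi)|=o(|\xi|^{-p})$ as $|\xi|\to\infty$ for some $p>0$. Assume moreover $\int v\,\mu_0(dv)=0$, $\int|v|^2\mu_0(dv)=3$, $\int v_i^2\mu_0(dv)=\sigma_i^2$ ($i=1,2,3$), $\int v_iv_j\mu_0(dv)=0$ for $i\ne j$ (so $\sigma_1^2+\sigma_2^2+\sigma_3^2=3$). Then there exists a constant $\lambda>0$ such that $$|\hat\mu_0(\xi)|\le\Big(\frac{\lambda^2}{\lambda^2+|\xi|^2}\Big)^q\qquad\text{for every }\xi\in\mathbb R^3,$$ where $q=1/(2\lceil 2/p\rceil)$.
   Context: $\hat\mu_0(\xi)=\int e^{i\xi\cdot v}\mu_0(dv)$; $\lceil x\rceil$ is the least integer not less than $x$. *)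

theory Defs
  imports "HOL-Probability.Probability" "HOL-Library.Landau_Symbols"
begin

definition fourier3 :: "(real^3) measure \<Rightarrow> real^3 \<Rightarrow> complex" where
  "fourier3 M \<xi> = (\<integral>v. cis (\<xi> \<bullet> v) \<partial>M)"

end

theory Submission
  imports Defs
begin

(* Write phi for the Fourier transform of M.  The majorant (lam^2/(lam^2+|xi|^2))^q is at
   least 1 - |xi|^2/lam^2 everywhere, at least 1/2 for |xi| <= lam and at least |xi|^(-p)
   for |xi| >= lam whenever 2q <= p (kernel_majorant).  So it suffices to bound |phi| in
   three frequency ranges:
   - far:    the o(|xi|^-p) hypothesis gives |phi(xi)| <= |xi|^-p <= 1/2 for |xi| >= R;
   - middle: |phi| is bounded away from 1 on |xi| >= r > 0, by the doubling inequality
             1 - |phi(2 xi)| <= 4 (1 - |phi(xi)|) iterated until 2^N xi is far;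
   - near:   the second-order Taylor expansion of phi (mean zero, finite third moment)
             gives |phi(xi)| <= 1 - s |xi|^2 / 4, where s > 0 bounds all coordinate
             variances from below; they are positive because a vanishing variance would
             force phi = 1 along a whole coordinate axis, contradicting the decay. *)

lemma power_le_one_plus_power:
  fixes x :: real
  assumes "0 \<le> x" "k \<le> n"
  shows "x ^ k \<le> 1 + x ^ n"
proof (cases "x \<le> 1")
  case True
  then have "x ^ k \<le> 1" using assms by (simp add: power_le_one)
  then show ?thesis using assms by (simp add: add_increasing2)
next
  case False
  then have "x ^ k \<le> x ^ n" using assms by (intro power_increasing) auto
  then show ?thesis by simp
qed

lemma one_minus_cos_double: "1 - cos (2 * y) \<le> 4 * (1 - cos (y::real))"
proof -
  have "1 - cos (2 * y) = 2 * (1 - cos y) * (1 + cos y)"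
    using cos_double_cos[of y] by (simp add: algebra_simps power2_eq_square)
  also have "\<dots> \<le> 2 * (1 - cos y) * 2"
    by (intro mult_left_mono) auto
  finally show ?thesis by simp
qed

lemma powr_ge_self:
  fixes y q :: real
  assumes "0 < y" "y \<le> 1" "0 < q" "q \<le> 1"
  shows "y \<le> y powr q"
  using powr_mono'[of q 1 y] assms by simp

lemma kernel_ge_quadratic:
  fixes lam n q :: real
  assumes "0 < lam" "0 < q" "q \<le> 1"
  shows "1 - n^2 / lam^2 \<le> (lam^2 / (lam^2 + n^2)) powr q"
proof -
  have pos: "0 < lam^2 + n^2" using assms by (simp add: add_pos_nonneg)
  have "1 - n^2 / lam^2 \<le> 1 - n^2 / (lam^2 + n^2)"
    using assms pos by (intro diff_left_mono divide_left_mono) auto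
  also have "\<dots> = lam^2 / (lam^2 + n^2)"
    using pos by (subst diff_divide_eq_iff) auto
  also have "\<dots> \<le> (lam^2 / (lam^2 + n^2)) powr q"
    using assms pos by (intro powr_ge_self) auto
  finally show ?thesis .
qed

lemma kernel_ge_half:
  fixes lam n q :: real
  assumes "0 < lam" "0 \<le> n" "n \<le> lam" "0 < q" "q \<le> 1"
  shows "1/2 \<le> (lam^2 / (lam^2 + n^2)) powr q"
proof -
  have pos: "0 < lam^2 + n^2" using assms by (simp add: add_pos_nonneg)
  have "n^2 \<le> lam^2" using assms by (intro power_mono) auto
  then have "1/2 \<le> lam^2 / (lam^2 + n^2)" using pos by (simp add: field_simps)
  also have "\<dots> \<le> (lam^2 / (lam^2 + n^2)) powr q"
    using assms pos by (intro powr_ge_self) auto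
  finally show ?thesis .
qed

lemma kernel_ge_power:
  fixes lam n p q :: real
  assumes "2 \<le> lam" "lam \<le> n" "0 < q" "2 * q \<le> p"
  shows "n powr (-p) \<le> (lam^2 / (lam^2 + n^2)) powr q"
proof -
  have n1: "1 \<le> n" using assms by linarith
  have "lam^2 \<le> n^2" using assms by (intro power_mono) auto
  moreover have "2 * n^2 \<le> lam^2 * n^2"
    using assms power_mono[of 2 lam 2] by (intro mult_right_mono) auto
  ultimately have "lam^2 + n^2 \<le> lam^2 * n^2" by linarith
  then have "lam^2 / (lam^2 * n^2) \<le> lam^2 / (lam^2 + n^2)"
    using assms n1 by (intro divide_left_mono) (auto intro!: mult_pos_pos add_pos_pos)
  then have "1 / n^2 \<le> lam^2 / (lam^2 + n^2)" using assms by simp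
  then have "(1 / n^2) powr q \<le> (lam^2 / (lam^2 + n^2)) powr q"
    using n1 assms by (intro powr_mono2) auto
  moreover have "(1 / n^2) powr q = n powr (-(2 * q))"
  proof -
    have "(n^2) powr q = (n powr 2) powr q" using n1 by simp
    also have "\<dots> = n powr (2 * q)" by (simp add: powr_powr)
    finally have "(1 / n^2) powr q = 1 / n powr (2 * q)" by (simp add: powr_divide)
    then show ?thesis by (simp add: powr_minus_divide)
  qed
  moreover have "n powr (-p) \<le> n powr (-(2 * q))"
    using n1 assms by (intro powr_mono) auto
  ultimately show ?thesis by simp
qed

lemma kernel_majorant:
  fixes f :: "'a::real_normed_vector \<Rightarrow> real" and p q r s \<delta> R :: real
  assumes q: "0 < q" "q \<le> 1" "2 * q \<le> p"
    and pos: "0 < s" "0 < \<delta>" "0 \<le> R"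
    and near: "\<And>x. norm x \<le> r \<Longrightarrow> f x \<le> 1 - s * norm x ^ 2"
    and middle: "\<And>x. r \<le> norm x \<Longrightarrow> f x \<le> 1 - \<delta>"
    and far: "\<And>x. R \<le> norm x \<Longrightarrow> f x \<le> norm x powr (-p)"
    and far_half: "\<And>x. R \<le> norm x \<Longrightarrow> f x \<le> 1/2"
  shows "\<exists>lam>0. \<forall>x. f x \<le> (lam^2 / (lam^2 + norm x ^ 2)) powr q"
proof (intro exI[of _ "2 + R + 1/s + R^2/\<delta>"] conjI allI)
  define lam where "lam = 2 + R + 1/s + R^2/\<delta>"
  have lam2: "2 \<le> lam" and lamR: "R \<le> lam" using pos by (simp_all add: lam_def)
  then have "lam \<le> lam^2" by (simp add: power2_eq_square)
  moreover have "0 \<le> 1/s" "0 \<le> R^2/\<delta>" using pos by auto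
  ultimately have lam_s: "1/s \<le> lam^2" and lam_\<delta>: "R^2/\<delta> \<le> lam^2"
    using pos unfolding lam_def by linarith+
  show "0 < lam" using lam2 by simp
  fix x :: 'a
  define n where "n = norm x"
  have quad: "1 - n^2 / lam^2 \<le> (lam^2 / (lam^2 + n^2)) powr q"
    using lam2 q by (intro kernel_ge_quadratic) auto
  consider "lam \<le> n" | "R \<le> n" "n \<le> lam" | "n \<le> R" "n \<le> r" | "n \<le> R" "r \<le> n"
    by linarith
  then show "f x \<le> (lam^2 / (lam^2 + norm x ^ 2)) powr q"
  proof cases
    case 1
    then show ?thesis using far[of x] lamR lam2 q kernel_ge_power[of lam n q p]
      unfolding n_def by auto
  next
    case 2
    then show ?thesis using far_half[of x] lam2 q kernel_ge_half[of lam n q]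
      unfolding n_def by auto
  next
    case 3
    have "1 \<le> s * lam^2" using lam_s pos by (simp add: field_simps)
    then have "n^2 * 1 \<le> n^2 * (s * lam^2)" by (intro mult_left_mono) auto
    then have "n^2 \<le> s * n^2 * lam^2" by (simp add: algebra_simps)
    then have "n^2 / lam^2 \<le> s * n^2" using lam2 by (simp add: divide_le_eq)
    then show ?thesis using near[of x] 3 quad unfolding n_def by linarith
  next
    case 4
    have "n^2 \<le> R^2" using 4 by (intro power_mono) (auto simp: n_def)
    also have "\<dots> \<le> \<delta> * lam^2" using lam_\<delta> pos by (simp add: field_simps)
    finally have "n^2 / lam^2 \<le> \<delta>" using lam2 by (simp add: divide_le_eq mult.commute)
    then show ?thesis using middle[of x] 4 quad unfolding n_def by linarith
  qed
qed

lemma exponent_bounds: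
  fixes p :: real
  assumes "0 < p"
  defines "q \<equiv> 1 / (2 * real_of_int \<lceil>2 / p\<rceil>)"
  shows "0 < q" "q \<le> 1" "2 * q \<le> p"
proof -
  define k where "k = real_of_int \<lceil>2 / p\<rceil>"
  have k: "2 / p \<le> k" unfolding k_def by simp
  then have "0 < \<lceil>2 / p\<rceil>" using assms unfolding k_def by simp
  then have k1: "1 \<le> k" unfolding k_def by simp
  show "0 < q" "q \<le> 1" using k1 unfolding q_def k_def[symmetric] by auto
  have "2 \<le> k * p" using k assms by (simp add: pos_divide_le_eq)
  then have "1 / k \<le> p / 2" using k1 by (simp add: field_simps)
  then show "2 * q \<le> p" unfolding q_def k_def[symmetric] using assms by simp
qed

lemma eventually_below_power:
  fixes g :: "'a::real_normed_vector \<Rightarrow> real" and p :: real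
  assumes p: "0 < p" and g: "g \<in> o[at_infinity](\<lambda>x. norm x powr (-p))"
  obtains R where "0 \<le> R"
    "\<And>x. R \<le> norm x \<Longrightarrow> g x \<le> norm x powr (-p)"
    "\<And>x. R \<le> norm x \<Longrightarrow> g x \<le> 1/2"
proof -
  have "\<forall>\<^sub>F x in at_infinity. norm (g x) \<le> 1 * norm (norm x powr (-p))"
    by (rule landau_o.smallD[OF g]) simp
  then obtain b where b: "\<And>x. b \<le> norm x \<Longrightarrow> g x \<le> norm x powr (-p)"
    unfolding eventually_at_infinity by (auto intro: order_trans[OF abs_ge_self])
  define R where "R = max b (2 powr (1/p))"
  have half: "norm x powr (-p) \<le> 1/2" if "R \<le> norm x" for x :: 'a
  proof -
    have "norm x powr (-p) \<le> (2 powr (1/p)) powr (-p)"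
      using that p by (intro powr_mono2') (auto simp: R_def)
    also have "\<dots> = 1/2" using p by (simp add: powr_powr powr_minus_divide)
    finally show ?thesis .
  qed
  have below: "g x \<le> norm x powr (-p)" if "R \<le> norm x" for x
    using b that by (simp add: R_def)
  show ?thesis
  proof (rule that[of R])
    show "0 \<le> R" by (simp add: R_def max.coboundedI2)
    show "g x \<le> 1/2" if "R \<le> norm x" for x
      using below[OF that] half[OF that] by linarith
  qed (use below in auto)
qed

section \<open>Fourier transforms of Borel probability measures on R^3\<close>

locale prob_real3 = prob_space M for M :: "(real^3) measure" +
  assumes sets_M: "sets M = sets borel"
begin

lemma measurable_M: "f \<in> borel_measurable borel \<Longrightarrow> f \<in> borel_measurable M"
  by (simp add: measurable_cong_sets[OF sets_M refl])

lemma integrable_dominated_by_moment: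
  fixes g :: "real^3 \<Rightarrow> 'b::{banach,second_countable_topology}"
  assumes mom: "integrable M (\<lambda>v. norm v ^ n)"
    and g: "g \<in> borel_measurable borel" "\<And>v. norm (g v) \<le> 1 + norm v ^ n"
  shows "integrable M g"
proof (rule Bochner_Integration.integrable_bound[where f="\<lambda>v. 1 + norm v ^ n"])
  show "integrable M (\<lambda>v. 1 + norm v ^ n)" using mom by auto
  show "g \<in> borel_measurable M" using measurable_M g(1) by blast
  show "AE v in M. norm (g v) \<le> norm (1 + norm v ^ n)"
  proof (rule AE_I2)
    fix v :: "real^3"
    have "0 \<le> 1 + norm v ^ n" by simp
    then show "norm (g v) \<le> norm (1 + norm v ^ n)" using g(2)[of v] by simp
  qed
qed

lemma integrable_lower_moment:
  assumes "integrable M (\<lambda>v. norm v ^ n)" "k \<le> n"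
  shows "integrable M (\<lambda>v. norm v ^ k)"
proof (rule integrable_dominated_by_moment[OF assms(1)])
  show "(\<lambda>v. norm v ^ k) \<in> borel_measurable borel" by measurable
  show "norm (norm v ^ k) \<le> 1 + norm v ^ n" for v :: "real^3"
    using power_le_one_plus_power[OF norm_ge_zero assms(2)] by simp
qed

lemma measurable_cis: "(\<lambda>v. cis (\<xi> \<bullet> v - c)) \<in> borel_measurable M"
  unfolding cis_conv_exp by (intro measurable_M borel_measurable_continuous_onI continuous_intros)

lemma integrable_cis: "integrable M (\<lambda>v. cis (\<xi> \<bullet> v - c))"
  by (rule integrable_const_bound[where B=1]) (simp_all add: measurable_cis)

lemma integrable_cos: "integrable M (\<lambda>v. cos (\<xi> \<bullet> v - c))"
  using integrable_Re[OF integrable_cis] by simp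

lemma fourier3_rotate: "Re (cis (- c) * fourier3 M \<xi>) = (\<integral>v. cos (\<xi> \<bullet> v - c) \<partial>M)"
proof -
  have "cis (- c) * fourier3 M \<xi> = (\<integral>v. cis (\<xi> \<bullet> v - c) \<partial>M)"
    unfolding fourier3_def integral_mult_right_zero[symmetric] by (simp add: cis_mult)
  also have "Re \<dots> = (\<integral>v. Re (cis (\<xi> \<bullet> v - c)) \<partial>M)"
    by (rule integral_Re[symmetric]) (rule integrable_cis)
  finally show ?thesis by simp
qed

text \<open>Doubling inequality: 1 - |phi(2 xi)| <= 4 (1 - |phi(xi)|).  Rotate phi(xi) to the
  positive real axis and integrate the pointwise inequality one_minus_cos_double.\<close>
lemma fourier3_doubling: "1 - norm (fourier3 M (2 *\<^sub>R \<xi>)) \<le> 4 * (1 - norm (fourier3 M \<xi>))"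
proof -
  define t where "t = Arg (fourier3 M \<xi>)"
  define C where "C \<eta> c = (\<integral>v. cos (\<eta> \<bullet> v - c) \<partial>M)" for \<eta> c
  have "cis (- t) * fourier3 M \<xi> = complex_of_real (norm (fourier3 M \<xi>))"
    using rcis_cmod_Arg[of "fourier3 M \<xi>"]
    by (metis rcis_def t_def cis_mult mult.left_commute add.left_inverse cis_zero mult_1_right)
  then have norm_eq: "norm (fourier3 M \<xi>) = C \<xi> t"
    using fourier3_rotate[of t \<xi>] by (simp add: C_def)
  have "C (2 *\<^sub>R \<xi>) (2 * t) = Re (cis (- (2 * t)) * fourier3 M (2 *\<^sub>R \<xi>))"
    using fourier3_rotate by (simp add: C_def)
  also have "\<dots> \<le> norm (cis (- (2 * t)) * fourier3 M (2 *\<^sub>R \<xi>))" by (rule complex_Re_le_cmod)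
  finally have norm2: "C (2 *\<^sub>R \<xi>) (2 * t) \<le> norm (fourier3 M (2 *\<^sub>R \<xi>))"
    by (simp add: norm_mult)
  have one_minus: "1 - C \<eta> c = (\<integral>v. 1 - cos (\<eta> \<bullet> v - c) \<partial>M)" for \<eta> c
    using Bochner_Integration.integral_diff[OF integrable_const integrable_cos, of 1 \<eta> c] by (simp add: prob_space C_def)
  have I2: "integrable M (\<lambda>v. 1 - cos ((2 *\<^sub>R \<xi>) \<bullet> v - 2 * t))"
    by (intro Bochner_Integration.integrable_diff integrable_const integrable_cos)
  have I1: "integrable M (\<lambda>v. 4 * (1 - cos (\<xi> \<bullet> v - t)))"
    by (intro integrable_mult_right Bochner_Integration.integrable_diff integrable_const integrable_cos)
  have "1 - C (2 *\<^sub>R \<xi>) (2 * t) \<le> (\<integral>v. 4 * (1 - cos (\<xi> \<bullet> v - t)) \<partial>M)"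
    unfolding one_minus
  proof (rule integral_mono[OF I2 I1])
    fix v
    have "1 - cos (2 * (\<xi> \<bullet> v - t)) \<le> 4 * (1 - cos (\<xi> \<bullet> v - t))" by (rule one_minus_cos_double)
    then show "1 - cos ((2 *\<^sub>R \<xi>) \<bullet> v - 2 * t) \<le> 4 * (1 - cos (\<xi> \<bullet> v - t))"
      by (simp add: algebra_simps)
  qed
  also have "\<dots> = 4 * (1 - C \<xi> t)" by (simp only: one_minus integral_mult_right_zero)
  finally show ?thesis using norm_eq norm2 by argo
qed

lemma fourier3_doubling_iter:
  "1 - norm (fourier3 M ((2^n) *\<^sub>R \<xi>)) \<le> 4^n * (1 - norm (fourier3 M \<xi>))"
proof (induction n)
  case (Suc n)
  have "(2^(Suc n)) *\<^sub>R \<xi> = 2 *\<^sub>R ((2^n) *\<^sub>R \<xi>)" by simp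
  then have "1 - norm (fourier3 M ((2^(Suc n)) *\<^sub>R \<xi>)) \<le> 4 * (1 - norm (fourier3 M ((2^n) *\<^sub>R \<xi>)))"
    using fourier3_doubling[of "(2^n) *\<^sub>R \<xi>"] by simp
  also have "\<dots> \<le> 4 * (4^n * (1 - norm (fourier3 M \<xi>)))" using Suc by simp
  finally show ?case by simp
qed simp

text \<open>If |phi| <= 1/2 beyond some radius, then |phi| stays uniformly below 1 away from the
  origin: double xi until it leaves that radius.\<close>
lemma fourier3_bounded_away_from_one:
  assumes r: "0 < r" and far: "\<And>\<xi>. R \<le> norm \<xi> \<Longrightarrow> norm (fourier3 M \<xi>) \<le> 1/2"
  obtains \<delta> where "0 < \<delta>" "\<And>\<xi>. r \<le> norm \<xi> \<Longrightarrow> norm (fourier3 M \<xi>) \<le> 1 - \<delta>"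
proof -
  obtain N :: nat where N: "R / r < 2^N" using real_arch_pow[of 2 "R/r"] by auto
  have "norm (fourier3 M \<xi>) \<le> 1 - 1 / (2 * 4^N)" if "r \<le> norm \<xi>" for \<xi>
  proof -
    have "R < 2^N * r" using N r by (simp add: divide_less_eq mult.commute)
    also have "\<dots> \<le> norm ((2^N) *\<^sub>R \<xi>)" using that by simp
    finally have "norm (fourier3 M ((2^N) *\<^sub>R \<xi>)) \<le> 1/2" using far by simp
    then have "1/2 \<le> 4^N * (1 - norm (fourier3 M \<xi>))"
      using fourier3_doubling_iter[of N \<xi>] by linarith
    then show ?thesis by (simp add: field_simps)
  qed
  then show ?thesis by (intro that[of "1 / (2 * 4^N)"]) auto
qed

end

section \<open>Measures with a finite third moment\<close>

locale prob_real3_moment3 = prob_real3 +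
  assumes moment3: "integrable M (\<lambda>v. norm v ^ 3)"
begin

lemma integrable_component: "integrable M (\<lambda>v. v $ i)"
proof (rule integrable_dominated_by_moment[OF moment3])
  fix v :: "real^3"
  show "norm (v $ i) \<le> 1 + norm v ^ 3"
    using component_le_norm_cart[of v i] power_le_one_plus_power[of "norm v" 1 3] by simp
qed simp

lemma integrable_component_product: "integrable M (\<lambda>v. v $ i * v $ j)"
proof (rule integrable_dominated_by_moment[OF moment3])
  fix v :: "real^3"
  have "norm (v $ i * v $ j) \<le> norm v * norm v"
    using component_le_norm_cart[of v i] component_le_norm_cart[of v j]
    by (simp add: abs_mult mult_mono)
  also have "\<dots> \<le> 1 + norm v ^ 3"
    using power_le_one_plus_power[of "norm v" 2 3] by (simp add: power2_eq_square)
  finally show "norm (v $ i * v $ j) \<le> 1 + norm v ^ 3" .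
qed simp

lemma inner_square_expand:
  fixes \<xi> v :: "real^3"
  shows "(\<xi> \<bullet> v)^2 = (\<Sum>i\<in>UNIV. \<Sum>j\<in>UNIV. (\<xi>$i * \<xi>$j) * (v$i * v$j))"
  unfolding inner_vec_def power2_eq_square sum_product by (simp add: algebra_simps)

lemma integrable_inner: "integrable M (\<lambda>v. \<xi> \<bullet> v)"
  unfolding inner_vec_def inner_real_def
  by (intro Bochner_Integration.integrable_sum integrable_mult_right integrable_component)

lemma integrable_inner_square: "integrable M (\<lambda>v. (\<xi> \<bullet> v)^2)"
  unfolding inner_square_expand
  by (intro Bochner_Integration.integrable_sum integrable_mult_right integrable_component_product)

lemma fourier3_taylor:
  assumes mean: "\<And>i. (\<integral>v. v $ i \<partial>M) = 0"
  shows "norm (fourier3 M \<xi> - complex_of_real (1 - (\<integral>v. (\<xi> \<bullet> v)^2 \<partial>M) / 2))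
           \<le> norm \<xi> ^ 3 * (\<integral>v. norm v ^ 3 \<partial>M) / 6"
proof -
  define E where "E v = cis (\<xi> \<bullet> v) - (1 + \<i> * complex_of_real (\<xi> \<bullet> v) - complex_of_real ((\<xi> \<bullet> v)^2/2))" for v
  have IA: "integrable M (\<lambda>v. complex_of_real (1 - (\<xi> \<bullet> v)^2/2))"
    by (intro integrable_of_real Bochner_Integration.integrable_diff integrable_const
        integrable_divide integrable_inner_square)
  have IB: "integrable M (\<lambda>v. \<i> * complex_of_real (\<xi> \<bullet> v))"
    by (intro integrable_mult_right integrable_of_real integrable_inner)
  have IE: "integrable M E"
    unfolding E_def by (intro Bochner_Integration.integrable_diff Bochner_Integration.integrable_add
        integrable_cis[of _ 0, simplified] integrable_const integrable_mult_right integrable_of_real integrable_inner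
        integrable_inner_square integrable_divide)
  have mean_inner: "(\<integral>v. \<xi> \<bullet> v \<partial>M) = 0"
    unfolding inner_vec_def using integrable_component by (simp add: mean)
  have "fourier3 M \<xi> = (\<integral>v. complex_of_real (1 - (\<xi> \<bullet> v)^2/2) + \<i> * complex_of_real (\<xi> \<bullet> v) + E v \<partial>M)"
    unfolding fourier3_def E_def by simp
  also have "\<dots> = complex_of_real (\<integral>v. 1 - (\<xi> \<bullet> v)^2/2 \<partial>M)
                   + \<i> * complex_of_real (\<integral>v. \<xi> \<bullet> v \<partial>M) + (\<integral>v. E v \<partial>M)"
    by (simp only: Bochner_Integration.integral_add[OF Bochner_Integration.integrable_add[OF IA IB] IE]
        Bochner_Integration.integral_add[OF IA IB]
        integral_complex_of_real integral_mult_right_zero)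
  finally have split: "fourier3 M \<xi> - complex_of_real (1 - (\<integral>v. (\<xi> \<bullet> v)^2 \<partial>M) / 2) = (\<integral>v. E v \<partial>M)"
    using integrable_inner_square by (simp add: mean_inner prob_space)
  have "norm (\<integral>v. E v \<partial>M) \<le> (\<integral>v. norm (E v) \<partial>M)" by (rule integral_norm_bound)
  also have "\<dots> \<le> (\<integral>v. norm \<xi> ^ 3 * norm v ^ 3 / 6 \<partial>M)"
  proof (rule integral_mono)
    fix v
    have "norm (E v) \<le> \<bar>\<xi> \<bullet> v\<bar>^3 / 6"
      using iexp_approx1[of "\<xi> \<bullet> v" 2] unfolding E_def
      by (simp add: cis_conv_exp numeral_3_eq_3 numeral_2_eq_2 power2_eq_square algebra_simps)
    also have "\<dots> \<le> (norm \<xi> * norm v)^3 / 6"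
      by (intro divide_right_mono power_mono Cauchy_Schwarz_ineq2) auto
    finally show "norm (E v) \<le> norm \<xi> ^ 3 * norm v ^ 3 / 6" by (simp add: power_mult_distrib)
  qed (use IE moment3 in auto)
  also have "\<dots> = norm \<xi> ^ 3 * (\<integral>v. norm v ^ 3 \<partial>M) / 6" by simp
  finally show ?thesis unfolding split .
qed

text \<open>With uncorrelated coordinates the quadratic form E (xi . v)^2 is diagonal, so it is
  bounded below by any common lower bound of the coordinate variances.\<close>
lemma second_moment_lower:
  assumes cov: "\<And>i j. i \<noteq> j \<Longrightarrow> (\<integral>v. v $ i * v $ j \<partial>M) = 0"
    and s: "\<And>i. s \<le> (\<integral>v. (v $ i)^2 \<partial>M)"
  shows "s * norm \<xi> ^ 2 \<le> (\<integral>v. (\<xi> \<bullet> v)^2 \<partial>M)"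
proof -
  have "(\<integral>v. (\<xi> \<bullet> v)^2 \<partial>M) = (\<Sum>i\<in>UNIV. \<Sum>j\<in>UNIV. (\<xi>$i * \<xi>$j) * (\<integral>v. v$i * v$j \<partial>M))"
    unfolding inner_square_expand using integrable_component_product
    by (simp add: Bochner_Integration.integral_sum)
  also have "\<dots> = (\<Sum>i\<in>UNIV. \<Sum>j\<in>UNIV. if j = i then (\<xi>$i)^2 * (\<integral>v. (v$i)^2 \<partial>M) else 0)"
    by (intro sum.cong refl) (auto simp: cov power2_eq_square)
  also have "\<dots> = (\<Sum>i\<in>UNIV. (\<xi>$i)^2 * (\<integral>v. (v$i)^2 \<partial>M))"
    by simp
  finally have diag: "(\<integral>v. (\<xi> \<bullet> v)^2 \<partial>M) = (\<Sum>i\<in>UNIV. (\<xi>$i)^2 * (\<integral>v. (v$i)^2 \<partial>M))" .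
  have "norm \<xi> ^ 2 = (\<Sum>i\<in>UNIV. (\<xi> $ i)^2)"
    unfolding power2_norm_eq_inner inner_vec_def by (simp add: power2_eq_square)
  then have "s * norm \<xi> ^ 2 = (\<Sum>i\<in>UNIV. (\<xi> $ i)^2 * s)"
    by (simp add: sum_distrib_left mult.commute)
  also have "\<dots> \<le> (\<Sum>i\<in>UNIV. (\<xi>$i)^2 * (\<integral>v. (v$i)^2 \<partial>M))"
    by (intro sum_mono mult_left_mono) (auto simp: s)
  finally show ?thesis unfolding diag .
qed

text \<open>Cauchy-Schwarz bounds the quadratic form above by the second moment.\<close>
lemma second_moment_upper: "(\<integral>v. (\<xi> \<bullet> v)^2 \<partial>M) \<le> norm \<xi> ^ 2 * (\<integral>v. norm v ^ 2 \<partial>M)"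
proof -
  have "(\<integral>v. (\<xi> \<bullet> v)^2 \<partial>M) \<le> (\<integral>v. norm \<xi> ^ 2 * norm v ^ 2 \<partial>M)"
  proof (rule integral_mono)
    fix v
    have "(\<xi> \<bullet> v)^2 \<le> (norm \<xi> * norm v)^2"
      using power_mono[OF Cauchy_Schwarz_ineq2[of \<xi> v] abs_ge_zero, of 2] by simp
    then show "(\<xi> \<bullet> v)^2 \<le> norm \<xi> ^ 2 * norm v ^ 2" by (simp add: power_mult_distrib)
  qed (use integrable_inner_square integrable_lower_moment[OF moment3, of 2] in auto)
  then show ?thesis by simp
qed

lemma fourier3_near_origin:
  assumes mean: "\<And>i. (\<integral>v. v $ i \<partial>M) = 0"
    and cov: "\<And>i j. i \<noteq> j \<Longrightarrow> (\<integral>v. v $ i * v $ j \<partial>M) = 0"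
    and s: "0 < s" "\<And>i. s \<le> (\<integral>v. (v $ i)^2 \<partial>M)"
  obtains r where "0 < r" "\<And>\<xi>. norm \<xi> \<le> r \<Longrightarrow> norm (fourier3 M \<xi>) \<le> 1 - s/4 * norm \<xi> ^ 2"
proof -
  define m2 where "m2 = (\<integral>v. norm v ^ 2 \<partial>M)"
  define m3 where "m3 = (\<integral>v. norm v ^ 3 \<partial>M)"
  have m: "0 \<le> m2" "0 \<le> m3" unfolding m2_def m3_def by (auto intro: Bochner_Integration.integral_nonneg)
  define r where "r = min 1 (min (2 / (m2 + 1)) (3 * s / (2 * (m3 + 1))))"
  have r: "0 < r" "r \<le> 1" "r \<le> 2 / (m2 + 1)" "r \<le> 3 * s / (2 * (m3 + 1))"
    using m s unfolding r_def by auto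
  have "norm (fourier3 M \<xi>) \<le> 1 - s/4 * norm \<xi> ^ 2" if \<xi>: "norm \<xi> \<le> r" for \<xi>
  proof -
    define n where "n = norm \<xi>"
    define Q where "Q = (\<integral>v. (\<xi> \<bullet> v)^2 \<partial>M)"
    have n: "0 \<le> n" "n \<le> r" using \<xi> unfolding n_def by auto
    have "n^2 \<le> r * r" using n by (simp add: power2_eq_square mult_mono)
    also have "\<dots> \<le> r" using r by (simp add: mult_left_le)
    finally have "n^2 \<le> 2 / (m2 + 1)" using r by linarith
    then have "n^2 * m2 \<le> 2 / (m2 + 1) * (m2 + 1)"
      using m by (intro mult_mono) auto
    also have "\<dots> = 2" using m(1) by (simp add: field_simps)
    finally have Q2: "Q \<le> 2" using second_moment_upper[of \<xi>] unfolding Q_def n_def m2_def by linarith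
    have "n * m3 \<le> r * (m3 + 1)" using n m by (intro mult_mono) auto
    also have "\<dots> \<le> 3 * s / (2 * (m3 + 1)) * (m3 + 1)" using r m by (intro mult_right_mono) auto
    also have "\<dots> = 3 * s / 2" using m(2) by (simp add: field_simps)
    finally have "n * m3 \<le> 3 * s / 2" .
    then have "n^2 * (n * m3) \<le> n^2 * (3 * s / 2)" by (intro mult_left_mono) auto
    then have remainder: "n^3 * m3 / 6 \<le> s/4 * n^2"
      by (simp add: power3_eq_cube power2_eq_square algebra_simps)
    have "norm (fourier3 M \<xi>) \<le> norm (complex_of_real (1 - Q/2)) + n^3 * m3 / 6"
      using fourier3_taylor[OF mean, of \<xi>] norm_triangle_sub[of "fourier3 M \<xi>" "complex_of_real (1 - Q/2)"]
      unfolding Q_def n_def m3_def by linarith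
    moreover have "norm (complex_of_real (1 - Q/2)) = 1 - Q/2"
      unfolding norm_of_real using Q2 by simp
    moreover have "s * n^2 \<le> Q" using second_moment_lower[OF cov s(2)] unfolding Q_def n_def .
    ultimately show ?thesis using remainder unfolding n_def by linarith
  qed
  then show ?thesis using r(1) that by blast
qed

lemma fourier3_degenerate_axis:
  assumes "(\<integral>v. (v $ i)^2 \<partial>M) = 0"
  shows "fourier3 M (t *\<^sub>R axis i 1) = 1"
proof -
  have "AE v in M. (v $ i)^2 = 0"
    using assms integrable_component_product[of i i]
    by (subst integral_nonneg_eq_0_iff_AE[symmetric]) (auto simp: power2_eq_square)
  then have "AE v in M. cis ((t *\<^sub>R axis i 1) \<bullet> v) = 1"
    by eventually_elim (simp add: inner_axis')
  then have "fourier3 M (t *\<^sub>R axis i 1) = (\<integral>v. 1 \<partial>M)"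
    unfolding fourier3_def
    by (rule integral_cong_AE[rotated 2]) (use measurable_cis[of "t *\<^sub>R axis i 1" 0] in simp_all)
  then show ?thesis by (simp add: prob_space)
qed

lemma variances_bounded_below:
  assumes far: "\<And>\<xi>. R \<le> norm \<xi> \<Longrightarrow> norm (fourier3 M \<xi>) < 1"
  obtains s where "0 < s" "\<And>i. s \<le> (\<integral>v. (v $ i)^2 \<partial>M)"
proof -
  define var where "var i = (\<integral>v. (v $ i)^2 \<partial>M)" for i :: 3
  have "0 < var i" for i
  proof -
    have "var i \<noteq> 0"
    proof
      assume "var i = 0"
      then have "fourier3 M (\<bar>R\<bar> *\<^sub>R axis i 1) = 1"
        using fourier3_degenerate_axis unfolding var_def by blast
      then show False using far[of "\<bar>R\<bar> *\<^sub>R axis i 1"] abs_ge_self[of R] by simp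
    qed
    moreover have "0 \<le> var i" unfolding var_def by (rule Bochner_Integration.integral_nonneg) auto
    ultimately show ?thesis by simp
  qed
  then have "0 < Min (range var)" "\<And>i. Min (range var) \<le> var i"
    using Min_in[of "range var"] by auto
  then show ?thesis using that unfolding var_def by blast
qed

end

theorem proposition2p1:
  fixes M :: "(real^3) measure" and p :: real and \<sigma> :: "3 \<Rightarrow> real"
  assumes prob: "prob_space M"
    and borel: "sets M = sets borel"
    and mom4: "integrable M (\<lambda>v. norm v ^ 4)"
    and p_pos: "p > 0"
    and decay: "(\<lambda>\<xi>. norm (fourier3 M \<xi>)) \<in> o[at_infinity](\<lambda>\<xi>. norm \<xi> powr (- p))"
    and mean: "\<And>i. (\<integral>v. v $ i \<partial>M) = 0"
    and energy: "(\<integral>v. norm v ^ 2 \<partial>M) = 3"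
    and var: "\<And>i. (\<integral>v. (v $ i)^2 \<partial>M) = (\<sigma> i)^2"
    and cov: "\<And>i j. i \<noteq> j \<Longrightarrow> (\<integral>v. v $ i * v $ j \<partial>M) = 0"
  shows "\<exists>lam>0. \<forall>\<xi>::real^3. norm (fourier3 M \<xi>)
           \<le> (lam^2 / (lam^2 + norm \<xi> ^ 2)) powr (1 / (2 * real_of_int \<lceil>2 / p\<rceil>))"
proof -
  interpret prob_real3 M using prob borel by (simp add: prob_real3_def prob_real3_axioms_def)
  interpret prob_real3_moment3 M
    using integrable_lower_moment[OF mom4, of 3] by unfold_locales simp
  obtain R where R: "0 \<le> R"
    and far: "\<And>\<xi>. R \<le> norm \<xi> \<Longrightarrow> norm (fourier3 M \<xi>) \<le> norm \<xi> powr (-p)"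
    and far_half: "\<And>\<xi>. R \<le> norm \<xi> \<Longrightarrow> norm (fourier3 M \<xi>) \<le> 1/2"
    using eventually_below_power[OF p_pos decay] by blast
  have far_lt: "norm (fourier3 M \<xi>) < 1" if "R \<le> norm \<xi>" for \<xi>
    using far_half[OF that] by linarith
  obtain s where s: "0 < s" "\<And>i. s \<le> (\<integral>v. (v $ i)^2 \<partial>M)"
    using variances_bounded_below[OF far_lt] by blast
  obtain r where r: "0 < r"
    and near: "\<And>\<xi>. norm \<xi> \<le> r \<Longrightarrow> norm (fourier3 M \<xi>) \<le> 1 - s/4 * norm \<xi> ^ 2"
    using fourier3_near_origin[OF mean cov s] by blast
  obtain \<delta> where \<delta>: "0 < \<delta>" and middle: "\<And>\<xi>. r \<le> norm \<xi> \<Longrightarrow> norm (fourier3 M \<xi>) \<le> 1 - \<delta>"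
    using fourier3_bounded_away_from_one[OF r far_half] by blast
  have s4: "0 < s/4" using s(1) by simp
  show ?thesis
    by (rule kernel_majorant[OF exponent_bounds[OF p_pos] s4 \<delta> R near middle far far_half])
qed

end
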